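(* The set $A = \{2^j : j \geq 2\} \cup \{3^k : k \geq 2\}$ is fractionally dense and contains no arithmetic progression of length three.
   Context: $\mathbb{N} = \{1,2,3,\ldots\}$. For $A \subseteq \mathbb{N}$, the quotient set is $R(A) = \{a/a' : a, a' \in A\}$, and $A$ is called fractionally dense if the closure of $R(A)$ in $\mathbb{R}$ equals $[0,\infty)$. An arithmetic progression of length three in $A$ is a triple $c, c+d, c+2d$ of elements of $A$ with $d \geq 1$ an integer. *)

theory Defs
  imports "HOL-Analysis.Analysis"
begin

definition quotient_set :: "nat set \<Rightarrow> real set" where
  "quotient_set A = {real a / real a' | a a'. a \<in> A \<and> a' \<in> A}"

definition fractionally_dense :: "nat set \<Rightarrow> bool" where
  "fractionally_dense A \<longleftrightarrow> closure (quotient_set A) = {0..}"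

definition has_3AP :: "nat set \<Rightarrow> bool" where
  "has_3AP A \<longleftrightarrow> (\<exists>c d. d \<ge> 1 \<and> c \<in> A \<and> c + d \<in> A \<and> c + 2 * d \<in> A)"

end

theory Submission
  imports Defs "HOL-Analysis.Kronecker_Approximation_Theorem"
begin

text \<open>Since \<open>log 3 2\<close> is irrational, Kronecker's theorem makes the numbers \<open>j log 3 2 - k\<close>
  dense, so \<open>2^j / 3^k = 3 powr (j log 3 2 - k)\<close> approximates every positive real, even with
  both exponents at least 2. A three-term progression \<open>a + b = 2m\<close> in \<open>A\<close> has \<open>a, b\<close> of
  equal parity, hence both powers of 2 or both powers of 3; then \<open>4 | a + b\<close>, resp.
  \<open>3 | a + b\<close>, forces \<open>m\<close> to be a power of the same base as \<open>b > m\<close>, so \<open>b \<ge> 2m\<close>,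
  which contradicts \<open>a > 0\<close>.\<close>

lemma log_irrational_if_coprime:
  fixes p q :: nat
  assumes "coprime p q" "p > 1" "q > 1"
  shows "log q p \<notin> \<rat>"
proof
  assume "log q p \<in> \<rat>"
  then obtain a b :: int where ab: "log q p = of_int a / of_int b" "b > 0"
    by (cases rule: Rats_cases') auto
  have "log q p > 0" using assms by simp
  with ab have "a > 0" by (simp add: zero_less_divide_iff)
  have "real p ^ nat b = (q powr log q p) powr b"
    using assms ab(2) by (simp add: powr_realpow[symmetric] powr_powr)
  also have "\<dots> = real q ^ nat a"
    using assms ab \<open>a > 0\<close> by (simp add: powr_powr powr_realpow[symmetric])
  finally have "p ^ nat b = q ^ nat a"
    by (metis of_nat_eq_iff of_nat_power)
  moreover have "coprime (p ^ nat b) (q ^ nat a)" using assms(1) by simp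
  ultimately have "q ^ nat a = 1" by simp
  with assms(3) \<open>a > 0\<close> show False by simp
qed

lemma approx_by_multiples_minus_nat:
  fixes \<theta> \<alpha> \<delta> :: real
  assumes "\<theta> \<notin> \<rat>" "\<theta> \<ge> 0" "\<alpha> \<le> 0" "\<delta> > 0"
  obtains j k :: nat where "\<bar>real j * \<theta> - real k - \<alpha>\<bar> < \<delta>"
proof -
  \<comment> \<open>an error below 1 together with \<open>\<alpha> \<le> 0 \<le> j\<theta>\<close> forces \<open>h \<ge> 0\<close>\<close>
  have "min \<delta> 1 > 0" using assms(4) by simp
  then obtain h j :: int where "j > 0" and hj: "\<bar>of_int j * \<theta> - of_int h - \<alpha>\<bar> < min \<delta> 1"
    by (rule sequence_of_fractional_parts_is_dense[OF assms(1), where \<alpha>=\<alpha>])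
  have "of_int j * \<theta> \<ge> 0" using \<open>j > 0\<close> assms(2) by simp
  with hj assms(3) have "h \<ge> 0" by linarith
  with hj \<open>j > 0\<close> have "\<bar>real (nat j) * \<theta> - real (nat h) - \<alpha>\<bar> < \<delta>" by simp
  then show thesis by (rule that)
qed

lemma power_quotients_dense:
  fixes p q m n :: nat and x e :: real
  assumes "coprime p q" "p > 1" "q > 1" "x > 0" "e > 0"
  obtains j k where "j \<ge> m" "k \<ge> n" "\<bar>real (p ^ j) / real (q ^ k) - x\<bar> < e"
proof -
  obtain b0 where "real (q ^ n) * x < real p ^ b0"
    using real_arch_pow assms(2) by (metis of_nat_1 of_nat_less_iff)
  define b where "b = max m b0"
  have "real p ^ b0 \<le> real p ^ b"
    unfolding b_def using assms(2) by (intro power_increasing) auto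
  \<comment> \<open>scaling by \<open>c\<close> makes the target exponent \<open>y\<close> nonpositive and the final exponents \<open>\<ge> m, n\<close>\<close>
  define c where "c = real (p ^ b) / real (q ^ n)"
  have "c > 0" unfolding c_def using assms(2,3) by simp
  define y where "y = log q (x / c)"
  have "x / c \<le> 1"
    using \<open>real (q ^ n) * x < _\<close> \<open>_ \<le> real p ^ b\<close> \<open>c > 0\<close> assms(3)
    by (simp add: c_def divide_simps mult.commute)
  then have "y \<le> 0" unfolding y_def using assms(3,4) \<open>c > 0\<close> by simp
  define g where "g z = c * q powr z" for z
  have "g y = x" unfolding g_def y_def using assms(3,4) \<open>c > 0\<close> by simp
  have "isCont g y" unfolding g_def using assms(3) by (intro continuous_intros) simp
  then obtain d where "d > 0" and d: "\<And>z. \<bar>z - y\<bar> < d \<Longrightarrow> \<bar>g z - x\<bar> < e"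
    using assms(5) \<open>g y = x\<close> unfolding continuous_at_eps_delta dist_real_def by metis
  have "log q p \<ge> 0" using assms(2,3) by simp
  obtain j k :: nat where "\<bar>real j * log q p - real k - y\<bar> < d"
    using approx_by_multiples_minus_nat[OF log_irrational_if_coprime[OF assms(1-3)]
        \<open>log q p \<ge> 0\<close> \<open>y \<le> 0\<close> \<open>d > 0\<close>] .
  moreover have "g (real j * log q p - real k) = real (p ^ (b + j)) / real (q ^ (n + k))"
  proof -
    have "q powr (real j * log q p - real k) = (q powr log q p) powr j / q powr k"
      by (simp add: powr_diff powr_powr mult.commute)
    also have "\<dots> = real p ^ j / real q ^ k"
      using assms(2,3) by (simp add: powr_realpow)
    finally show ?thesis unfolding g_def c_def by (simp add: power_add)
  qed
  ultimately have "\<bar>real (p ^ (b + j)) / real (q ^ (n + k)) - x\<bar> < e" using d by metis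
  then show thesis by (rule that[rotated 2]) (auto simp: b_def)
qed

lemma fractionally_dense_if_quotients_approx:
  assumes "\<And>x e. x > 0 \<Longrightarrow> e > 0 \<Longrightarrow> \<exists>a\<in>A. \<exists>a'\<in>A. \<bar>real a / real a' - x\<bar> < e"
  shows "fractionally_dense A"
  unfolding fractionally_dense_def
proof
  have "quotient_set A \<subseteq> {0..}" unfolding quotient_set_def by auto
  then show "closure (quotient_set A) \<subseteq> {0..}" by (rule closure_minimal) simp
next
  have "x \<in> closure (quotient_set A)" if "x > 0" for x
    unfolding closure_approachable dist_real_def quotient_set_def
    using assms[OF that] by blast
  then have "closure {0<..} \<subseteq> closure (quotient_set A)"
    by (intro closure_minimal) auto
  then show "{0..} \<subseteq> closure (quotient_set A)" by simp
qed

lemma power_add_power_neq_double_power: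
  fixes p :: nat
  assumes "p \<ge> 2" "p ^ k < p ^ j"
  shows "p ^ i + p ^ j \<noteq> 2 * p ^ k"
proof -
  have "k < j" using assms power_less_imp_less_exp by simp
  then have "p * p ^ k \<le> p ^ j"
    using assms(1) power_increasing[of "Suc k" j p] by simp
  then have "2 * p ^ k \<le> p ^ j"
    using assms(1) mult_le_mono1 order_trans by blast
  moreover have "p ^ i > 0" using assms(1) by simp
  ultimately show ?thesis by linarith
qed

lemma no_3AP_powers_of_2_and_3:
  "\<not> has_3AP ({2 ^ j | j. j \<ge> 2} \<union> {3 ^ k | k. k \<ge> 2})"
proof
  define P2 P3 :: "nat set" where "P2 = {2 ^ j | j. j \<ge> 2}" and "P3 = {3 ^ k | k. k \<ge> 2}"
  have P2_dvd: "4 dvd x" if "x \<in> P2" for x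
    using that unfolding P2_def by (auto simp: le_iff_add power_add)
  have P3_dvd: "odd x \<and> 3 dvd x" if "x \<in> P3" for x
    using that unfolding P3_def by auto
  have even_iff: "even x \<longleftrightarrow> x \<in> P2" if "x \<in> P2 \<union> P3" for x
    using that P2_dvd P3_dvd dvd_trans[of 2 4 x] by auto
  assume "has_3AP (P2 \<union> P3)"
  then obtain c d where "d \<ge> 1" "c \<in> P2 \<union> P3" "c + d \<in> P2 \<union> P3" "c + 2 * d \<in> P2 \<union> P3"
    unfolding has_3AP_def by blast
  then obtain a m b where mem: "a \<in> P2 \<union> P3" "m \<in> P2 \<union> P3" "b \<in> P2 \<union> P3"
    and "m < b" and mid: "a + b = 2 * m"
    by (intro that[of c "c + d" "c + 2 * d"]) auto
  have "even (a + b)" using mid by simp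
  then have "a \<in> P2 \<longleftrightarrow> b \<in> P2" using mem even_iff by auto
  then consider "a \<in> P2" "b \<in> P2" | "a \<in> P3" "b \<in> P3"
    using mem by blast
  then show False
  proof cases
    case 1
    then have "4 dvd a" "4 dvd b" using P2_dvd by auto
    then have "even m" using mid by presburger
    then have "m \<in> P2" using mem(2) even_iff by blast
    then show False
      using 1 \<open>m < b\<close> mid power_add_power_neq_double_power[of 2] unfolding P2_def by auto
  next
    case 2
    then have "3 dvd a" "3 dvd b" using P3_dvd by auto
    then have "3 dvd m" using mid by presburger
    moreover have "\<not> 3 dvd (2::nat) ^ j" for j
    proof
      assume "3 dvd (2::nat) ^ j"
      moreover have "coprime (3::nat) (2 ^ j)" by simp
      ultimately have "is_unit (3::nat)" by (meson coprime_common_divisor dvd_refl)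
      then show False by simp
    qed
    ultimately have "m \<in> P3" using mem(2) unfolding P2_def by auto
    then show False
      using 2 \<open>m < b\<close> mid power_add_power_neq_double_power[of 3] unfolding P3_def by auto
  qed
qed

theorem proposition4:
  defines "A \<equiv> {2 ^ j | j::nat. j \<ge> 2} \<union> {3 ^ k | k::nat. k \<ge> 2}"
  shows "fractionally_dense A \<and> \<not> has_3AP A"
proof
  show "fractionally_dense A"
  proof (rule fractionally_dense_if_quotients_approx)
    fix x e :: real
    assume "x > 0" "e > 0"
    moreover have "coprime (2::nat) 3" by simp
    ultimately obtain j k where "j \<ge> 2" "k \<ge> 2" "\<bar>real (2 ^ j) / real (3 ^ k) - x\<bar> < e"
      using power_quotients_dense[of 2 3 x e 2 2] by auto
    then show "\<exists>a\<in>A. \<exists>a'\<in>A. \<bar>real a / real a' - x\<bar> < e"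
      unfolding A_def by blast
  qed
  show "\<not> has_3AP A"
    unfolding A_def by (rule no_3AP_powers_of_2_and_3)
qed

end
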